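(* Let $G$ be a finite graph and $\mathbf{Y}=\lim_{z\to\infty}\mathbf{Y}(z)\in[0,\infty]^{\vec E}$ (a monotone limit). Then $\mathbf{Y}$ is the smallest solution in $[0,\infty]^{\vec E}$ of the fixed point equation $\mathbf{Y}=\mathcal{Q}_G(\mathcal{R}_G(\mathbf{Y}))$.
   Context: $\vec E$: directed edges; $\partial u$: neighbours of $u$; empty sums are $0$. $\mathbf{Y}(z)\in(0,\infty)^{\vec E}$ is the unique solution of $Y_{u\to v}=z/(1+\sum_{w\in\partial u\setminus v}Y_{w\to u})$ (the limit of LABP), and it is non-decreasing in $z$. $\mathcal{R}_G:[0,\infty]^{\vec E}\to[0,1]^{\vec E}$ is $\mathcal{R}_{u\to v}(\mathbf{Y})=1/(1+\sum_{w\in\partial u\setminus v}Y_{w\to u})$, with value $0$ if some $Y_{w\to u}=\infty$, $w\in\partial u\setminus v$. $\mathcal{Q}_G:[0,1]^{\vec E}\to(0,\infty]^{\vec E}$ is $\mathcal{Q}_{u\to v}(\mathbf{X})=1/\sum_{w\in\partial u\setminus v}X_{w\to u}$ with $1/0=\infty$ (so $\mathcal{Q}_{u\to v}(\mathbf{X})=\infty$ if all these $X_{w\to u}$ are $0$ or the sum is empty). Order is componentwise. *)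

theory Defs
  imports "HOL-Analysis.Analysis" "HOL-Library.Extended_Nonnegative_Real"
begin

(* Since E is symmetric, E itself is the set of directed edges \<rightarrow>E:
   (u,v) \<in> E represents the directed edge u\<rightarrow>v. *)
definition finite_graph :: "'a set \<Rightarrow> ('a \<times> 'a) set \<Rightarrow> bool" where
  "finite_graph V E \<longleftrightarrow> finite V \<and> E \<subseteq> V \<times> V \<and> sym E \<and> (\<forall>u. (u,u) \<notin> E)"

definition nbrs :: "('a \<times> 'a) set \<Rightarrow> 'a \<Rightarrow> 'a set" where
  "nbrs E u = {w. (u,w) \<in> E}"

(* Vectors are functions on pairs; off \<rightarrow>E they are fixed to 0. *)
definition LABP_sol :: "('a \<times> 'a) set \<Rightarrow> real \<Rightarrow> ('a \<times> 'a \<Rightarrow> real) \<Rightarrow> bool" where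
  "LABP_sol E z Y \<longleftrightarrow>
     (\<forall>u v. (u,v) \<in> E \<longrightarrow> 0 < Y (u,v) \<and>
        Y (u,v) = z / (1 + (\<Sum>w\<in>nbrs E u - {v}. Y (w,u)))) \<and>
     (\<forall>e. e \<notin> E \<longrightarrow> Y e = 0)"

definition Yz :: "('a \<times> 'a) set \<Rightarrow> real \<Rightarrow> ('a \<times> 'a \<Rightarrow> real)" where
  "Yz E z = (THE Y. LABP_sol E z Y)"

definition RG :: "('a \<times> 'a) set \<Rightarrow> ('a \<times> 'a \<Rightarrow> ennreal) \<Rightarrow> ('a \<times> 'a \<Rightarrow> ennreal)" where
  "RG E Y = (\<lambda>(u,v).
     if (\<exists>w\<in>nbrs E u - {v}. Y (w,u) = \<infinity>) then 0
     else 1 / (1 + (\<Sum>w\<in>nbrs E u - {v}. Y (w,u))))"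

definition QG :: "('a \<times> 'a) set \<Rightarrow> ('a \<times> 'a \<Rightarrow> ennreal) \<Rightarrow> ('a \<times> 'a \<Rightarrow> ennreal)" where
  "QG E X = (\<lambda>(u,v).
     if (\<Sum>w\<in>nbrs E u - {v}. X (w,u)) = 0 then \<infinity>
     else 1 / (\<Sum>w\<in>nbrs E u - {v}. X (w,u)))"

end

theory Submission
  imports Defs
begin

(* For z > 0 let T_z Y = z R_G(Y) on directed edges (zero elsewhere): the LABP
   map, an antitone operator on [0,\<infinity>]^E.  Its square is monotone, so it has a least fixed
   point a_z (Knaster-Tarski).  Writing S(Y)_{u\<rightarrow>v} = \<Sum>_{w\<in>\<partial>u\<setminus>v} R_G(Y)_{w\<rightarrow>u} one has
        T_z(T_z Y) = z / (1 + z S(Y)) = 1 / (1/z + S(Y))          and  Q_G(R_G Y) = 1 / S(Y).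
   (1) a_z and T_z a_z form a 2-cycle of T_z; a maximal-ratio argument on the finite edge set
       shows that finite 2-cycles of T_z collapse, so a_z is the unique LABP solution Y(z).
   (2) Letting z \<rightarrow> \<infinity> in a_z = 1/(1/z + S(a_z)), continuity of the extended-real operations
       gives Y = 1/S(Y) = Q_G(R_G Y).
   (3) If Y' = Q_G(R_G Y'), then T_z(T_z Y') = 1/(1/z + S(Y')) \<le> 1/S(Y') = Y', so Y' is a
       pre-fixed point of T_z\<^sup>2 and a_z \<le> Y' for every z; hence Y \<le> Y'. *)

lemma ennreal_inverse_antimono: "x \<le> y \<Longrightarrow> inverse y \<le> inverse (x::ennreal)"
  by (simp add: less_eq_ennreal.rep_eq inverse_ennreal.rep_eq ereal_inverse_antimono enn2ereal_nonneg)

lemma tendsto_inverse_ennreal: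
  fixes f :: "'b \<Rightarrow> ennreal"
  assumes "(f \<longlongrightarrow> l) F"
  shows "((\<lambda>x. inverse (f x)) \<longlongrightarrow> inverse l) F"
  using continuous_on_tendsto_compose[OF continuous_on_inverse_ennreal[OF continuous_on_id] assms,
      of UNIV]
  by simp

lemma inverse_ennreal_at_top: "((\<lambda>z::real. inverse (ennreal z)) \<longlongrightarrow> 0) at_top"
proof -
  have "((\<lambda>z::real. ennreal (inverse z)) \<longlongrightarrow> ennreal 0) at_top"
    by (intro tendsto_ennrealI tendsto_inverse_0_at_top filterlim_ident)
  moreover have "\<forall>\<^sub>F z in at_top. ennreal (inverse z) = inverse (ennreal z)"
    using eventually_gt_at_top[of "0::real"] by eventually_elim (simp add: inverse_ennreal)
  ultimately show ?thesis by (simp add: tendsto_cong)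
qed

(* The identity z/(1 + zB) = 1/(1/z + B), valid for all B \<in> [0,\<infinity>]; it rewrites two LABP
   steps in a form whose limit as z \<rightarrow> \<infinity> is visible. *)
lemma ennreal_two_step_eq:
  fixes z :: real and B :: ennreal
  assumes z: "z > 0"
  shows "ennreal z * inverse (1 + ennreal z * B) = inverse (inverse (ennreal z) + B)"
proof (cases B rule: ennreal_cases)
  case (real r)
  have "ennreal z * inverse (1 + ennreal z * B) = ennreal (z * inverse (1 + z * r))"
    using real z by (simp add: ennreal_mult[symmetric] inverse_ennreal add_pos_nonneg
        flip: ennreal_plus ennreal_1)
  also have "\<dots> = ennreal (inverse (inverse z + r))"
    using z real by (simp add: field_simps)
  also have "\<dots> = inverse (inverse (ennreal z) + B)"
    using real z by (simp add: inverse_ennreal add_pos_nonneg flip: ennreal_plus)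
  finally show ?thesis .
next
  case top
  then show ?thesis using z by (simp add: ennreal_mult_top)
qed

(* Consequently z/(1 + zA) \<le> 1/A: two LABP steps undershoot Q_G \<circ> R_G. *)
lemma ennreal_two_step_le:
  fixes z :: real and A :: ennreal
  assumes "z > 0"
  shows "ennreal z * inverse (1 + ennreal z * A) \<le> inverse A"
  unfolding ennreal_two_step_eq[OF assms] by (rule ennreal_inverse_antimono) simp

lemma finite_graph_facts:
  assumes "finite_graph V E"
  shows "finite E" and "finite (nbrs E u)" and "(u, w) \<in> E \<Longrightarrow> (w, u) \<in> E"
    and "w \<in> nbrs E u \<Longrightarrow> (w, u) \<in> E"
proof -
  have V: "finite V" "E \<subseteq> V \<times> V" "sym E" using assms unfolding finite_graph_def by simp_all
  show "finite E" using V(1,2) by (metis finite_SigmaI finite_subset)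
  have "nbrs E u \<subseteq> V" using V(2) unfolding nbrs_def by blast
  then show "finite (nbrs E u)" using V(1) by (rule finite_subset)
  show sy: "(w, u) \<in> E" if "(u, w) \<in> E" for u w using V(3) that by (rule symD)
  show "(w, u) \<in> E" if "w \<in> nbrs E u" using that sy unfolding nbrs_def by blast
qed

(* The incoming sum \<Sum>_{w\<in>\<partial>u\<setminus>v} X_{w\<rightarrow>u} at the directed edge u\<rightarrow>v; both R_G and Q_G are
   inversions of it. *)
definition inflow :: "('a \<times> 'a) set \<Rightarrow> ('a \<times> 'a \<Rightarrow> ennreal) \<Rightarrow> 'a \<times> 'a \<Rightarrow> ennreal" where
  "inflow E X = (\<lambda>(u, v). \<Sum>w\<in>nbrs E u - {v}. X (w, u))"

(* R_G(Y)_{u\<rightarrow>v} = 1/(1 + inflow); the special case of an infinite summand is absorbed by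
   1/\<infinity> = 0. *)
lemma RG_inflow:
  assumes "finite (nbrs E u)"
  shows "RG E Y (u, v) = inverse (1 + inflow E Y (u, v))"
  using assms by (auto simp: RG_def inflow_def divide_ennreal_def ennreal_sum_eq_top)

lemma QG_inflow: "QG E X (u, v) = inverse (inflow E X (u, v))"
  by (auto simp: QG_def inflow_def divide_ennreal_def)

lemma inflow_mono: "X \<le> Y \<Longrightarrow> inflow E X e \<le> inflow E Y e"
  by (cases e) (auto simp: inflow_def le_fun_def intro: sum_mono)

(* The LABP map T_z: Y \<mapsto> z R_G(Y) on directed edges and 0 elsewhere, so that the LABP
   solutions Y(z) are exactly its real, positive fixed points. *)
definition labp_map :: "('a \<times> 'a) set \<Rightarrow> real \<Rightarrow> ('a \<times> 'a \<Rightarrow> ennreal) \<Rightarrow> 'a \<times> 'a \<Rightarrow> ennreal" where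
  "labp_map E z Y = (\<lambda>e. if e \<in> E then ennreal z * RG E Y e else 0)"

(* T_z is antitone; hence T_z \<circ> T_z is monotone. *)
lemma labp_map_antimono:
  assumes G: "finite_graph V E" and XY: "X \<le> Y"
  shows "labp_map E z Y \<le> labp_map E z X"
proof (rule le_funI)
  fix e :: "'a \<times> 'a"
  obtain u v where e: "e = (u, v)" by (cases e)
  have "RG E Y (u, v) \<le> RG E X (u, v)"
    unfolding RG_inflow[OF finite_graph_facts(2)[OF G]]
    by (intro ennreal_inverse_antimono add_left_mono inflow_mono XY)
  then show "labp_map E z Y e \<le> labp_map E z X e"
    unfolding labp_map_def e by (simp add: mult_left_mono)
qed

lemma inflow_labp_map:
  assumes G: "finite_graph V E"
  shows "inflow E (labp_map E z Y) (u, v) = ennreal z * inflow E (RG E Y) (u, v)"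
  unfolding inflow_def labp_map_def using finite_graph_facts(4)[OF G]
  by (simp add: sum_distrib_left)

lemma labp_map_edge:
  assumes G: "finite_graph V E" and uv: "(u, v) \<in> E"
  shows "labp_map E z Y (u, v) = ennreal z * inverse (1 + inflow E Y (u, v))"
  using uv by (simp add: labp_map_def RG_inflow[OF finite_graph_facts(2)[OF G]])

lemma labp_map_twice:
  assumes G: "finite_graph V E" and uv: "(u, v) \<in> E"
  shows "labp_map E z (labp_map E z Y) (u, v) =
           ennreal z * inverse (1 + ennreal z * inflow E (RG E Y) (u, v))"
  unfolding labp_map_edge[OF G uv] inflow_labp_map[OF G] ..

lemma ratio_step:
  fixes z c S T :: real
  assumes "z > 0" "c > 1" "S \<ge> 0" "T \<ge> 0" "S \<le> c * T"
  shows "z / (1 + T) < c * (z / (1 + S))"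
proof -
  have "1 + S < c * (1 + T)" using assms by (simp add: algebra_simps)
  then have "z / (c * (1 + T)) < z / (1 + S)"
    using assms by (intro divide_strict_left_mono) (auto intro: add_pos_nonneg)
  then show ?thesis using assms by (simp add: field_simps)
qed

(* Comparison principle: if (a, a') and (b, b') are both 2-cycles of the real LABP map, then
   a \<le> b.  Otherwise the maximal ratio c = max a/b exceeds 1, and propagating a \<le> c b
   twice through the map yields a < c b at the edge attaining the maximum. *)
lemma labp_comparison:
  fixes a a' b b' :: "'a \<times> 'a \<Rightarrow> real"
  assumes fin: "finite E" and sym: "\<And>u w. (u, w) \<in> E \<Longrightarrow> (w, u) \<in> E" and z: "z > 0"
    and a'_nonneg: "\<And>e. e \<in> E \<Longrightarrow> a' e \<ge> 0" and b'_nonneg: "\<And>e. e \<in> E \<Longrightarrow> b' e \<ge> 0"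
    and a: "\<And>u v. (u, v) \<in> E \<Longrightarrow> a (u, v) = z / (1 + (\<Sum>w\<in>nbrs E u - {v}. a' (w, u)))"
    and b: "\<And>u v. (u, v) \<in> E \<Longrightarrow> b (u, v) = z / (1 + (\<Sum>w\<in>nbrs E u - {v}. b' (w, u)))"
    and a': "\<And>u v. (u, v) \<in> E \<Longrightarrow> a' (u, v) = z / (1 + (\<Sum>w\<in>nbrs E u - {v}. a (w, u)))"
    and b': "\<And>u v. (u, v) \<in> E \<Longrightarrow> b' (u, v) = z / (1 + (\<Sum>w\<in>nbrs E u - {v}. b (w, u)))"
    and e: "e \<in> E"
  shows "a e \<le> b e"
proof (rule ccontr)
  have nbrs_E: "(w, u) \<in> E" if "w \<in> nbrs E u" for w u using that sym by (auto simp: nbrs_def)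
  have pos: "x e > 0"
    if "e \<in> E" and "\<And>e. e \<in> E \<Longrightarrow> x' e \<ge> 0"
      and "\<And>u v. (u, v) \<in> E \<Longrightarrow> x (u, v) = z / (1 + (\<Sum>w\<in>nbrs E u - {v}. x' (w, u)))"
    for x x' :: "'a \<times> 'a \<Rightarrow> real" and e
  proof -
    obtain u v where uv: "e = (u, v)" by (cases e)
    have "(\<Sum>w\<in>nbrs E u - {v}. x' (w, u)) \<ge> 0" using that(2) nbrs_E by (intro sum_nonneg) auto
    then show ?thesis using that(1) that(3)[of u v] z uv by simp
  qed
  have a_pos: "e \<in> E \<Longrightarrow> a e > 0" and b_pos: "e \<in> E \<Longrightarrow> b e > 0" for e
    using pos[OF _ a'_nonneg a] pos[OF _ b'_nonneg b] by blast+
  define c where "c = Max ((\<lambda>e. a e / b e) ` E)"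
  have a_le: "a e \<le> c * b e" if "e \<in> E" for e
  proof -
    have "a e / b e \<le> c" unfolding c_def using fin that by (intro Max_ge) auto
    then show ?thesis using b_pos[OF that] by (simp add: divide_le_eq mult.commute)
  qed
  assume "\<not> a e \<le> b e"
  moreover have "c * b e \<le> b e" if "c \<le> 1" using mult_right_mono[OF that less_imp_le[OF b_pos[OF e]]] by simp
  ultimately have c_gt_1: "c > 1" using a_le[OF e] by fastforce
  have "c \<in> (\<lambda>e. a e / b e) ` E" unfolding c_def using fin e by (intro Max_in) auto
  then obtain u v where uv: "(u, v) \<in> E" and c_uv: "c = a (u, v) / b (u, v)" by auto
  \<comment> \<open>Propagating a \<le> c b one step backwards gives b' \<le> c a' ...\<close>
  have b'_le: "b' (w, u) \<le> c * a' (w, u)" if w: "w \<in> nbrs E u - {v}" for w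
  proof -
    have wu: "(w, u) \<in> E" using w nbrs_E by auto
    have sum_le: "(\<Sum>x\<in>nbrs E w - {u}. a (x, w)) \<le> c * (\<Sum>x\<in>nbrs E w - {u}. b (x, w))"
      unfolding sum_distrib_left using a_le nbrs_E by (intro sum_mono) auto
    have "(\<Sum>x\<in>nbrs E w - {u}. a (x, w)) \<ge> 0" "(\<Sum>x\<in>nbrs E w - {u}. b (x, w)) \<ge> 0"
      using a_pos b_pos nbrs_E by (auto intro!: sum_nonneg intro: less_imp_le)
    from ratio_step[OF z c_gt_1 this sum_le] show ?thesis unfolding a'[OF wu] b'[OF wu] by simp
  qed
  \<comment> \<open>... and a second step gives a < c b at the edge where the ratio is c.\<close>
  have sum_le: "(\<Sum>w\<in>nbrs E u - {v}. b' (w, u)) \<le> c * (\<Sum>w\<in>nbrs E u - {v}. a' (w, u))"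
    unfolding sum_distrib_left using b'_le by (intro sum_mono) auto
  have "(\<Sum>w\<in>nbrs E u - {v}. b' (w, u)) \<ge> 0" "(\<Sum>w\<in>nbrs E u - {v}. a' (w, u)) \<ge> 0"
    using a'_nonneg b'_nonneg nbrs_E by (auto intro!: sum_nonneg)
  from ratio_step[OF z c_gt_1 this sum_le] have "a (u, v) < c * b (u, v)"
    unfolding a[OF uv] b[OF uv] .
  then show False using c_uv b_pos[OF uv] by simp
qed

(* R_G takes values in [0,1], so T_z takes finite values. *)
lemma RG_le_1: "RG E Y e \<le> 1"
proof -
  have "inverse (1 + s) \<le> inverse (1::ennreal)" for s by (intro ennreal_inverse_antimono) simp
  then show ?thesis by (cases e) (simp add: RG_def divide_ennreal_def)
qed

lemma labp_map_finite: "labp_map E z Y e < top"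
proof -
  have "ennreal z * RG E Y e \<le> ennreal z * 1" by (intro mult_left_mono RG_le_1) simp
  then show ?thesis unfolding labp_map_def by (simp add: le_less_trans)
qed

lemma labp_map_real:
  assumes G: "finite_graph V E" and z: "z > 0" and fin: "\<And>e. e \<in> E \<Longrightarrow> Y e < top"
    and uv: "(u, v) \<in> E"
  shows "enn2real (labp_map E z Y (u, v)) = z / (1 + (\<Sum>w\<in>nbrs E u - {v}. enn2real (Y (w, u))))"
proof -
  define S where "S = (\<Sum>w\<in>nbrs E u - {v}. enn2real (Y (w, u)))"
  have S_nonneg: "S \<ge> 0" unfolding S_def by (intro sum_nonneg) simp
  have "inflow E Y (u, v) = (\<Sum>w\<in>nbrs E u - {v}. ennreal (enn2real (Y (w, u))))"
    unfolding inflow_def using fin finite_graph_facts(4)[OF G] by (auto intro: sum.cong)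
  also have "\<dots> = ennreal S" unfolding S_def by simp
  finally have "labp_map E z Y (u, v) = ennreal z * inverse (ennreal (1 + S))"
    using S_nonneg by (simp add: labp_map_edge[OF G uv] ennreal_plus)
  also have "\<dots> = ennreal (z / (1 + S))"
    using S_nonneg z by (simp add: inverse_ennreal ennreal_mult[symmetric] divide_inverse add_pos_nonneg
        flip: ennreal_plus ennreal_1)
  finally show ?thesis using S_nonneg z unfolding S_def by simp
qed

lemma labp_map_zero: "e \<notin> E \<Longrightarrow> labp_map E z Y e = 0"
  by (simp add: labp_map_def)

(* A 2-cycle of T_z is a fixed point: both halves are finite, and the comparison
   principle applied in both directions identifies them. *)
lemma labp_two_cycle:
  assumes G: "finite_graph V E" and z: "z > 0"
    and ab: "a = labp_map E z b" and ba: "b = labp_map E z a"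
  shows "a = b"
proof
  fix e
  show "a e = b e"
  proof (cases "e \<in> E")
    case True
    define ar where "ar = (\<lambda>e. enn2real (a e))"
    define br where "br = (\<lambda>e. enn2real (b e))"
    have a_fin: "a e < top" for e unfolding ab by (rule labp_map_finite)
    have b_fin: "b e < top" for e unfolding ba by (rule labp_map_finite)
    have ar: "ar (u, v) = z / (1 + (\<Sum>w\<in>nbrs E u - {v}. br (w, u)))"
      if "(u, v) \<in> E" for u v
      unfolding ar_def br_def ab by (rule labp_map_real[OF G z b_fin that])
    have br: "br (u, v) = z / (1 + (\<Sum>w\<in>nbrs E u - {v}. ar (w, u)))"
      if "(u, v) \<in> E" for u v
      unfolding ar_def br_def ba by (rule labp_map_real[OF G z a_fin that])
    note comparison = labp_comparison[OF finite_graph_facts(1,3)[OF G] z]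
    have "ar e \<le> br e" by (rule comparison[of br ar]) (use ar br True in \<open>auto simp: ar_def br_def\<close>)
    moreover have "br e \<le> ar e" by (rule comparison[of ar br]) (use ar br True in \<open>auto simp: ar_def br_def\<close>)
    ultimately have "ar e = br e" by simp
    then show ?thesis using a_fin[of e] b_fin[of e] unfolding ar_def br_def
      by (metis ennreal_enn2real less_top)
  next
    case False
    have "a e = 0" unfolding ab by (rule labp_map_zero[OF False])
    moreover have "b e = 0" unfolding ba by (rule labp_map_zero[OF False])
    ultimately show ?thesis by simp
  qed
qed

definition labp_lfp :: "('a \<times> 'a) set \<Rightarrow> real \<Rightarrow> 'a \<times> 'a \<Rightarrow> ennreal" where
  "labp_lfp E z = lfp (\<lambda>Y. labp_map E z (labp_map E z Y))"

lemma labp_lfp_fixed: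
  assumes G: "finite_graph V E" and z: "z > 0"
  shows "labp_map E z (labp_lfp E z) = labp_lfp E z"
proof -
  have "mono (\<lambda>Y. labp_map E z (labp_map E z Y))"
    by (intro monoI labp_map_antimono[OF G])
  then have "labp_lfp E z = labp_map E z (labp_map E z (labp_lfp E z))"
    unfolding labp_lfp_def by (rule lfp_unfold)
  from labp_two_cycle[OF G z refl this] show ?thesis .
qed

lemma labp_lfp_finite:
  assumes "finite_graph V E" and "z > 0"
  shows "labp_lfp E z e < top"
  by (subst labp_lfp_fixed[OF assms, symmetric]) (rule labp_map_finite)

lemma LABP_sol_unique:
  assumes G: "finite_graph V E" and z: "z > 0" and Y1: "LABP_sol E z Y1" and Y2: "LABP_sol E z Y2"
  shows "Y1 = Y2"
proof
  fix e
  note comparison = labp_comparison[OF finite_graph_facts(1,3)[OF G] z]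
  have eq: "Y (u, v) = z / (1 + (\<Sum>w\<in>nbrs E u - {v}. Y (w, u)))"
    and nonneg: "Y (u, v) \<ge> 0" if "LABP_sol E z Y" "(u, v) \<in> E" for Y u v
    using that unfolding LABP_sol_def by (simp, meson less_imp_le)
  show "Y1 e = Y2 e"
  proof (cases "e \<in> E")
    case True
    have "Y1 e \<le> Y2 e" by (rule comparison[of Y1 Y2 Y1 Y2]) (use eq nonneg Y1 Y2 True in auto)
    moreover have "Y2 e \<le> Y1 e" by (rule comparison[of Y2 Y1 Y2 Y1]) (use eq nonneg Y1 Y2 True in auto)
    ultimately show ?thesis by simp
  next
    case False
    then show ?thesis using Y1 Y2 unfolding LABP_sol_def by (cases e) auto
  qed
qed

lemma Yz_labp_lfp:
  assumes G: "finite_graph V E" and z: "z > 0"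
  shows "Yz E z = (\<lambda>e. enn2real (labp_lfp E z e))"
  unfolding Yz_def
proof (rule the_equality)
  define y where "y = (\<lambda>e. enn2real (labp_lfp E z e))"
  note fixed = labp_lfp_fixed[OF G z]
  note fin = labp_lfp_finite[OF G z]
  have y: "y (u, v) = z / (1 + (\<Sum>w\<in>nbrs E u - {v}. y (w, u)))" if "(u, v) \<in> E" for u v
    unfolding y_def by (subst (1) fixed[symmetric]) (rule labp_map_real[OF G z fin that])
  have y_pos: "y (u, v) > 0" if "(u, v) \<in> E" for u v
  proof -
    have "(\<Sum>w\<in>nbrs E u - {v}. y (w, u)) \<ge> 0" unfolding y_def by (intro sum_nonneg) simp
    then show ?thesis using y[OF that] z by (simp add: add_pos_nonneg)
  qed
  have y_zero: "y e = 0" if "e \<notin> E" for e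
    unfolding y_def by (subst fixed[symmetric]) (simp add: labp_map_zero[OF that])
  show "LABP_sol E z y" unfolding LABP_sol_def using y y_pos y_zero by blast
  then show "Y = y" if "LABP_sol E z Y" for Y using LABP_sol_unique[OF G z that] by simp
qed

lemma labp_lfp_two_step:
  assumes G: "finite_graph V E" and z: "z > 0" and uv: "(u, v) \<in> E"
  shows "labp_lfp E z (u, v) =
           inverse (inverse (ennreal z) + inflow E (RG E (labp_lfp E z)) (u, v))"
proof -
  have "labp_lfp E z (u, v) = labp_map E z (labp_map E z (labp_lfp E z)) (u, v)"
    by (simp add: labp_lfp_fixed[OF G z])
  also have "\<dots> = ennreal z * inverse (1 + ennreal z * inflow E (RG E (labp_lfp E z)) (u, v))"
    by (rule labp_map_twice[OF G uv])
  also have "\<dots> = inverse (inverse (ennreal z) + inflow E (RG E (labp_lfp E z)) (u, v))"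
    by (rule ennreal_two_step_eq[OF z])
  finally show ?thesis .
qed

(* Every fixed point of Q_G \<circ> R_G dominates a_z, because it is a pre-fixed point of
   T_z \<circ> T_z. *)
lemma labp_lfp_le_fixed_point:
  assumes G: "finite_graph V E" and z: "z > 0"
    and fixed: "\<forall>e\<in>E. Y e = QG E (RG E Y) e"
  shows "labp_lfp E z \<le> Y"
  unfolding labp_lfp_def
proof (rule lfp_lowerbound, rule le_funI)
  fix e :: "'a \<times> 'a"
  obtain u v where e: "e = (u, v)" by (cases e)
  show "labp_map E z (labp_map E z Y) e \<le> Y e"
  proof (cases "e \<in> E")
    case True
    then have "labp_map E z (labp_map E z Y) e =
                 ennreal z * inverse (1 + ennreal z * inflow E (RG E Y) (u, v))"
      using labp_map_twice[OF G] e by simp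
    also have "\<dots> \<le> QG E (RG E Y) (u, v)"
      unfolding QG_inflow by (rule ennreal_two_step_le[OF z])
    also have "\<dots> = Y e" using fixed True e by simp
    finally show ?thesis .
  qed (simp add: labp_map_zero)
qed

lemma tendsto_inflow:
  assumes G: "finite_graph V E" and lim: "\<And>e. e \<in> E \<Longrightarrow> ((\<lambda>z. f z e) \<longlongrightarrow> Y e) F"
  shows "((\<lambda>z. inflow E (f z) e) \<longlongrightarrow> inflow E Y e) F"
  using finite_graph_facts(4)[OF G] by (cases e) (auto simp: inflow_def intro!: tendsto_sum lim)

lemma tendsto_RG:
  assumes G: "finite_graph V E" and lim: "\<And>e. e \<in> E \<Longrightarrow> ((\<lambda>z. f z e) \<longlongrightarrow> Y e) F"
  shows "((\<lambda>z. RG E (f z) e) \<longlongrightarrow> RG E Y e) F"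
proof (cases e)
  case (Pair u v)
  show ?thesis unfolding Pair RG_inflow[OF finite_graph_facts(2)[OF G]]
    by (intro tendsto_inverse_ennreal tendsto_add tendsto_const tendsto_inflow[OF G lim])
qed

lemma limit_fixed_point:
  assumes G: "finite_graph V E"
    and lim: "\<And>e. e \<in> E \<Longrightarrow> ((\<lambda>z. labp_lfp E z e) \<longlongrightarrow> Y e) at_top"
    and uv: "(u, v) \<in> E"
  shows "Y (u, v) = QG E (RG E Y) (u, v)"
proof -
  have "\<forall>\<^sub>F z in at_top. labp_lfp E z (u, v) =
          inverse (inverse (ennreal z) + inflow E (RG E (labp_lfp E z)) (u, v))"
    using eventually_gt_at_top[of 0] by eventually_elim (rule labp_lfp_two_step[OF G _ uv])
  moreover have "((\<lambda>z. inverse (inverse (ennreal z) + inflow E (RG E (labp_lfp E z)) (u, v)))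
      \<longlongrightarrow> inverse (0 + inflow E (RG E Y) (u, v))) at_top"
    by (intro tendsto_inverse_ennreal tendsto_add inverse_ennreal_at_top tendsto_inflow[OF G]
        tendsto_RG[OF G] lim)
  ultimately have "((\<lambda>z. labp_lfp E z (u, v)) \<longlongrightarrow> QG E (RG E Y) (u, v)) at_top"
    by (simp add: QG_inflow tendsto_cong)
  with lim[OF uv] show ?thesis by (rule tendsto_unique[rotated]) simp
qed

theorem mainTheorem12:
  fixes V :: "'a set" and E :: "('a \<times> 'a) set" and Y :: "'a \<times> 'a \<Rightarrow> ennreal"
  assumes G: "finite_graph V E"
    and lim: "\<And>e. e \<in> E \<Longrightarrow> ((\<lambda>z. ennreal (Yz E z e)) \<longlongrightarrow> Y e) at_top"
  shows "(\<forall>e\<in>E. Y e = QG E (RG E Y) e) \<and>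
         (\<forall>Y' :: 'a \<times> 'a \<Rightarrow> ennreal. (\<forall>e\<in>E. Y' e = QG E (RG E Y') e) \<longrightarrow> (\<forall>e\<in>E. Y e \<le> Y' e))"
proof -
  have lim_lfp: "((\<lambda>z. labp_lfp E z e) \<longlongrightarrow> Y e) at_top" if e: "e \<in> E" for e
  proof -
    have "\<forall>\<^sub>F z in at_top. ennreal (Yz E z e) = labp_lfp E z e"
      using eventually_gt_at_top[of 0] by eventually_elim
        (simp add: Yz_labp_lfp[OF G] labp_lfp_finite[OF G])
    with lim[OF e] show ?thesis by (rule Lim_transform_eventually)
  qed
  have "Y e \<le> Y' e" if "\<forall>e\<in>E. Y' e = QG E (RG E Y') e" and "e \<in> E" for Y' e
  proof (rule tendsto_upperbound[OF lim_lfp[OF \<open>e \<in> E\<close>]])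
    show "\<forall>\<^sub>F z in at_top. labp_lfp E z e \<le> Y' e"
      using eventually_gt_at_top[of 0]
      by eventually_elim (rule le_funD[OF labp_lfp_le_fixed_point[OF G _ that(1)]])
  qed simp
  then show ?thesis using limit_fixed_point[OF G lim_lfp] by auto
qed

end
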